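(* Let $k\ge2$ be an integer. The closure of $\bar\Gamma(2)_k$ in $\mathrm{PSL}_2(\hat{\mathbb{Z}}_{\mathrm{odd}})$ is equal to $\hat D_{\mathrm{odd}}$.
   Context: $\bar\Gamma(2)=\Gamma(2)/\{\pm1\}\subset\mathrm{PSL}_2(\mathbb{Z})$; its lower central series is $\bar\Gamma(2)_1=\bar\Gamma(2)$, $\bar\Gamma(2)_{k+1}=[\bar\Gamma(2)_k,\bar\Gamma(2)]$. Let $\hat{\mathbb{Z}}_{\mathrm{odd}}=\varprojlim_{n\text{ odd}}\mathbb{Z}/n\mathbb{Z}\cong\prod_{p\ne2}\mathbb{Z}_p$, and view $\mathrm{PSL}_2(\mathbb{Z})\subset\mathrm{PSL}_2(\hat{\mathbb{Z}}_{\mathrm{odd}})$ with its profinite topology. $D_3\subset\mathrm{PSL}_2(\mathbb{Z}/3\mathbb{Z})$ is the index-$3$ Klein four-subgroup consisting of the classes of $\pm I$, $\pm\begin{pmatrix}0&-1\\1&0\end{pmatrix}$, $\pm\begin{pmatrix}-1&1\\1&1\end{pmatrix}$, $\pm\begin{pmatrix}1&1\\1&-1\end{pmatrix}$, and $\hat D_{\mathrm{odd}}$ is its inverse image in $\mathrm{PSL}_2(\hat{\mathbb{Z}}_{\mathrm{odd}})$ under reduction modulo $3$. *)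

theory Defs
  imports "HOL-Analysis.Analysis" "HOL-Algebra.Coset" "HOL-Algebra.Generated_Groups"
begin

type_synonym mat2 = "int^2^2"

definition mk2 :: "int \<Rightarrow> int \<Rightarrow> int \<Rightarrow> int \<Rightarrow> mat2" where
  "mk2 a b c d = (\<chi> i j. if i = 1 then (if j = 1 then a else b) else (if j = 1 then c else d))"

definition SL2Z :: "mat2 set" where
  "SL2Z = {A. det A = 1}"

definition SL2Z_grp :: "mat2 monoid" where
  "SL2Z_grp = \<lparr>carrier = SL2Z, mult = (**), one = mat 1\<rparr>"

definition PSL2Z :: "mat2 set monoid" where
  "PSL2Z = SL2Z_grp Mod {mat 1, - mat 1}"

definition mat_cong :: "nat \<Rightarrow> mat2 \<Rightarrow> mat2 \<Rightarrow> bool" where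
  "mat_cong n A B \<longleftrightarrow> (\<forall>i j. (A$i$j) mod int n = (B$i$j) mod int n)"

definition Gamma2 :: "mat2 set" where
  "Gamma2 = {A \<in> SL2Z. mat_cong 2 A (mat 1)}"

definition Gamma2bar :: "mat2 set set" where
  "Gamma2bar = (\<lambda>A. {mat 1, - mat 1} #>\<^bsub>SL2Z_grp\<^esub> A) ` Gamma2"

definition comm_subgroup :: "('a, 'b) monoid_scheme \<Rightarrow> 'a set \<Rightarrow> 'a set \<Rightarrow> 'a set" where
  "comm_subgroup G A B = generate G (\<Union>a\<in>A. \<Union>b\<in>B. {a \<otimes>\<^bsub>G\<^esub> b \<otimes>\<^bsub>G\<^esub> inv\<^bsub>G\<^esub> a \<otimes>\<^bsub>G\<^esub> inv\<^bsub>G\<^esub> b})"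

text \<open>Lower central series, indexed from 1: lcs 1 = \bar\Gamma(2), lcs (k+1) = [lcs k, \bar\Gamma(2)].
  (The value at 0 is an unused convention.)\<close>
fun Gamma2bar_lcs :: "nat \<Rightarrow> mat2 set set" where
  "Gamma2bar_lcs 0 = Gamma2bar"
| "Gamma2bar_lcs (Suc 0) = Gamma2bar"
| "Gamma2bar_lcs (Suc (Suc k)) = comm_subgroup PSL2Z (Gamma2bar_lcs (Suc k)) Gamma2bar"

text \<open>Elements of SL_2(\hat Z_odd), \hat Z_odd = lim_{n odd} Z/nZ: compatible families
  g n (n odd) of integer matrices, representing the reduction mod n, with det = 1 mod n.
  The values at even n are irrelevant.  An element of PSL_2(\hat Z_odd) is the class of such g
  modulo +-1.\<close>
definition SL2_Zodd :: "(nat \<Rightarrow> mat2) set" where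
  "SL2_Zodd = {g. (\<forall>m n. odd m \<and> odd n \<and> m dvd n \<longrightarrow> mat_cong m (g n) (g m))
                 \<and> (\<forall>n. odd n \<longrightarrow> det (g n) mod int n = 1 mod int n)}"

text \<open>Closure in PSL_2(\hat Z_odd) of a subset H of PSL_2(Z) (a set of classes {A,-A}):
  the class of g lies in the closure iff every basic open neighbourhood of it (image of g times
  the kernel of reduction mod n, n odd) meets the image of H.\<close>
definition in_closure_PSL2_Zodd :: "mat2 set set \<Rightarrow> (nat \<Rightarrow> mat2) \<Rightarrow> bool" where
  "in_closure_PSL2_Zodd H g \<longleftrightarrow> (\<forall>n. odd n \<longrightarrow> (\<exists>C\<in>H. \<exists>A\<in>C. mat_cong n A (g n)))"

text \<open>The Klein four-subgroup D_3 of PSL_2(Z/3Z), given by representatives.\<close>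
definition D3_reps :: "mat2 set" where
  "D3_reps = {mk2 1 0 0 1, mk2 0 (-1) 1 0, mk2 (-1) 1 1 1, mk2 1 1 1 (-1)}"

text \<open>The class of g lies in \hat D_odd iff its reduction mod 3 lies in D_3.\<close>
definition in_Dhat_odd :: "(nat \<Rightarrow> mat2) \<Rightarrow> bool" where
  "in_Dhat_odd g \<longleftrightarrow> (\<exists>D\<in>D3_reps. mat_cong 3 (g 3) D \<or> mat_cong 3 (g 3) (- D))"

end

theory Submission
  imports Defs
begin

text \<open>
  The character chi of SL_2(Z) obtained from PSL_2(F_3) \<cong> A_4 \<rightarrow> Z/3Z vanishes on
  commutators, and its kernel consists of the matrices whose reduction mod 3 lies in D_3 (up to
  sign). Since Gamma2bar_lcs k is generated by commutators for k \<ge> 2, its closure lies in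
  the preimage of D_3.

  Conversely, fix N odd. Gamma(2) maps onto SL_2(Z/NZ), and so, by induction on k, the matrices
  in SL_2(Z) congruent mod N to an element of Gamma2bar_lcs k include every M with chi M = 0:
  commutators of such matrices with Gamma(2) produce, mod N, all E12 (3 t) and all
  E12 j E21 1 E12 (1 - j), and these generate the kernel of chi. Lifting an element of
  SL_2(Z/3NZ) to SL_2(Z) then approximates every point of the preimage of D_3.
\<close>

lemma mk2_nth [simp]:
  "mk2 a b c d $ 1 $ 1 = a" "mk2 a b c d $ 1 $ 2 = b"
  "mk2 a b c d $ 2 $ 1 = c" "mk2 a b c d $ 2 $ 2 = d"
  by (simp_all add: mk2_def)

lemma mat2_cases:
  fixes A :: mat2
  obtains a b c d where "A = mk2 a b c d"
proof
  show "A = mk2 (A$1$1) (A$1$2) (A$2$1) (A$2$2)"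
    by (simp add: vec_eq_iff forall_2)
qed

lemma mk2_eq_iff [simp]: "mk2 a b c d = mk2 a' b' c' d' \<longleftrightarrow> a = a' \<and> b = b' \<and> c = c' \<and> d = d'"
  by (metis mk2_nth)

lemma mk2_mult [simp]:
  "mk2 a b c d ** mk2 e f g h = mk2 (a*e + b*g) (a*f + b*h) (c*e + d*g) (c*f + d*h)"
  by (simp add: vec_eq_iff forall_2 matrix_matrix_mult_def sum_2)

lemma det_mk2 [simp]: "det (mk2 a b c d) = a*d - b*c"
  by (simp add: det_2)

lemma uminus_mk2 [simp]: "- mk2 a b c d = mk2 (-a) (-b) (-c) (-d)"
  by (simp add: vec_eq_iff forall_2)

lemma mat1_eq_mk2: "mat 1 = mk2 1 0 0 1"
  by (simp add: vec_eq_iff forall_2 mat_def)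

lemma uminus_matrix_mult_left:
  fixes A B :: mat2
  shows "(- A) ** B = - (A ** B)"
  by (cases A rule: mat2_cases; cases B rule: mat2_cases) simp

lemma uminus_matrix_mult_right:
  fixes A B :: mat2
  shows "A ** (- B) = - (A ** B)"
  by (cases A rule: mat2_cases; cases B rule: mat2_cases) simp

definition adj2 :: "mat2 \<Rightarrow> mat2" where
  "adj2 A = mk2 (A$2$2) (- A$1$2) (- A$2$1) (A$1$1)"

lemma adj2_mk2 [simp]: "adj2 (mk2 a b c d) = mk2 d (-b) (-c) a"
  by (simp add: adj2_def)

lemma mat_cong_mk2 [simp]:
  "mat_cong n (mk2 a b c d) (mk2 a' b' c' d') \<longleftrightarrow>
     a mod int n = a' mod int n \<and> b mod int n = b' mod int n \<and>
     c mod int n = c' mod int n \<and> d mod int n = d' mod int n"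
  by (simp add: mat_cong_def forall_2)

lemma mat_cong_refl [simp]: "mat_cong n A A"
  by (simp add: mat_cong_def)

lemma mat_cong_trans: "mat_cong n A B \<Longrightarrow> mat_cong n B C \<Longrightarrow> mat_cong n A C"
  by (simp add: mat_cong_def)

lemma mat_cong_mult: "mat_cong n A A' \<Longrightarrow> mat_cong n B B' \<Longrightarrow> mat_cong n (A ** B) (A' ** B')"
  by (cases A rule: mat2_cases; cases B rule: mat2_cases; cases A' rule: mat2_cases;
      cases B' rule: mat2_cases) (auto intro!: mod_add_cong mod_mult_cong)

lemma mat_cong_adj2: "mat_cong n A A' \<Longrightarrow> mat_cong n (adj2 A) (adj2 A')"
  by (cases A rule: mat2_cases; cases A' rule: mat2_cases) (auto intro!: mod_minus_cong)

lemma mat_cong_dvd: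
  assumes "m dvd n" "mat_cong n A B"
  shows "mat_cong m A B"
  unfolding mat_cong_def
proof (intro allI)
  fix i j
  have "A $ i $ j mod int n = B $ i $ j mod int n"
    using assms(2) by (simp add: mat_cong_def)
  then have "A $ i $ j mod int n mod int m = B $ i $ j mod int n mod int m"
    by simp
  then show "A $ i $ j mod int m = B $ i $ j mod int m"
    using assms(1) by (simp add: mod_mod_cancel)
qed

section \<open>The groups SL_2(Z) and PSL_2(Z)\<close>

lemma SL2Z_mk2 [simp]: "mk2 a b c d \<in> SL2Z \<longleftrightarrow> a*d - b*c = 1"
  by (simp add: SL2Z_def)

lemma SL2Z_one [simp]: "mat 1 \<in> SL2Z"
  by (simp add: SL2Z_def)

lemma SL2Z_mult: "A \<in> SL2Z \<Longrightarrow> B \<in> SL2Z \<Longrightarrow> A ** B \<in> SL2Z"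
  by (simp add: SL2Z_def det_mul)

lemma SL2Z_adj2: "A \<in> SL2Z \<Longrightarrow> adj2 A \<in> SL2Z"
  by (cases A rule: mat2_cases) (simp add: algebra_simps)

lemma SL2Z_uminus: "A \<in> SL2Z \<Longrightarrow> - A \<in> SL2Z"
  by (cases A rule: mat2_cases) simp

lemma SL2Z_adj2_left: "A \<in> SL2Z \<Longrightarrow> adj2 A ** A = mat 1"
  by (cases A rule: mat2_cases) (simp add: mat1_eq_mk2 algebra_simps)

lemma group_SL2Z_grp: "group SL2Z_grp"
  by (rule groupI)
     (auto simp: SL2Z_grp_def SL2Z_mult matrix_mul_assoc intro!: bexI[of _ "adj2 _"]
       SL2Z_adj2 SL2Z_adj2_left)

interpretation SL: group SL2Z_grp
  by (rule group_SL2Z_grp)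

lemma SL2Z_grp_simps [simp]:
  "carrier SL2Z_grp = SL2Z" "x \<otimes>\<^bsub>SL2Z_grp\<^esub> y = x ** y" "\<one>\<^bsub>SL2Z_grp\<^esub> = mat 1"
  by (simp_all add: SL2Z_grp_def)

lemma SL2Z_grp_inv [simp]: "A \<in> SL2Z \<Longrightarrow> inv\<^bsub>SL2Z_grp\<^esub> A = adj2 A"
  by (rule SL.inv_equality) (simp_all add: SL2Z_adj2 SL2Z_adj2_left)

definition psl_class :: "mat2 \<Rightarrow> mat2 set" where
  "psl_class A = {A, - A}"

lemma psl_class_self: "A \<in> psl_class A"
  by (simp add: psl_class_def)

lemma r_coset_pm_one: "{mat 1, - mat 1} #>\<^bsub>SL2Z_grp\<^esub> A = psl_class A"
  by (auto simp: r_coset_def psl_class_def uminus_matrix_mult_left)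

lemma normal_pm_one: "{mat 1, - mat 1} \<lhd> SL2Z_grp"
proof (rule SL.normalI)
  show "subgroup {mat 1, - mat 1} SL2Z_grp"
    by (rule SL.subgroupI)
       (auto simp: SL2Z_uminus uminus_matrix_mult_left uminus_matrix_mult_right mat1_eq_mk2)
  show "\<forall>x\<in>carrier SL2Z_grp. {mat 1, - mat 1} #>\<^bsub>SL2Z_grp\<^esub> x = x <#\<^bsub>SL2Z_grp\<^esub> {mat 1, - mat 1}"
    by (auto simp: r_coset_def l_coset_def uminus_matrix_mult_left uminus_matrix_mult_right)
qed

lemma group_PSL2Z: "group PSL2Z"
  unfolding PSL2Z_def by (rule normal.factorgroup_is_group[OF normal_pm_one])

interpretation PSL: group PSL2Z
  by (rule group_PSL2Z)

lemma carrier_PSL2Z: "carrier PSL2Z = psl_class ` SL2Z"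
  by (simp add: PSL2Z_def carrier_FactGroup r_coset_pm_one)

lemma group_hom_psl_class: "group_hom SL2Z_grp PSL2Z psl_class"
proof -
  have "(\<lambda>A. {mat 1, - mat 1} #>\<^bsub>SL2Z_grp\<^esub> A) \<in> hom SL2Z_grp PSL2Z"
    unfolding PSL2Z_def by (rule normal.r_coset_hom_Mod[OF normal_pm_one])
  then show ?thesis
    by (simp add: group_hom_def group_hom_axioms_def r_coset_pm_one)
qed

interpretation psl: group_hom SL2Z_grp PSL2Z psl_class
  by (rule group_hom_psl_class)

lemma PSL2Z_memberE:
  assumes "C \<in> carrier PSL2Z" "A \<in> C"
  shows "C = psl_class A" "A \<in> SL2Z"
  using assms by (auto simp: carrier_PSL2Z psl_class_def SL2Z_uminus)

lemma PSL2Z_commutator: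
  assumes "A \<in> SL2Z" "B \<in> SL2Z"
  shows "psl_class A \<otimes>\<^bsub>PSL2Z\<^esub> psl_class B \<otimes>\<^bsub>PSL2Z\<^esub> inv\<^bsub>PSL2Z\<^esub> psl_class A
           \<otimes>\<^bsub>PSL2Z\<^esub> inv\<^bsub>PSL2Z\<^esub> psl_class B = psl_class (A ** B ** adj2 A ** adj2 B)"
  using assms by (simp add: psl.hom_mult[symmetric] psl.hom_inv[symmetric] SL2Z_mult SL2Z_adj2)

lemma Gamma2bar_eq: "Gamma2bar = psl_class ` Gamma2"
  by (simp add: Gamma2bar_def r_coset_pm_one)

lemma Gamma2bar_subset: "Gamma2bar \<subseteq> carrier PSL2Z"
  by (auto simp: Gamma2bar_eq Gamma2_def carrier_PSL2Z)

lemma Gamma2bar_lcs_Suc: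
  "1 \<le> k \<Longrightarrow> Gamma2bar_lcs (Suc k) = comm_subgroup PSL2Z (Gamma2bar_lcs k) Gamma2bar"
  by (cases k) simp_all

lemma Gamma2bar_lcs_subset: "Gamma2bar_lcs k \<subseteq> carrier PSL2Z"
proof (induction k rule: Gamma2bar_lcs.induct)
  case (3 k)
  then show ?case
    unfolding Gamma2bar_lcs.simps comm_subgroup_def
    by (intro PSL.generate_incl) (use Gamma2bar_subset in blast)
qed (simp_all add: Gamma2bar_subset)

lemma subgroup_Gamma2bar_lcs:
  assumes "2 \<le> k"
  shows "subgroup (Gamma2bar_lcs k) PSL2Z"
proof -
  have "Gamma2bar_lcs k = comm_subgroup PSL2Z (Gamma2bar_lcs (k - 1)) Gamma2bar"
    using assms Gamma2bar_lcs_Suc[of "k - 1"] by simp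
  moreover have "(\<Union>a\<in>Gamma2bar_lcs (k - 1). \<Union>b\<in>Gamma2bar.
      {a \<otimes>\<^bsub>PSL2Z\<^esub> b \<otimes>\<^bsub>PSL2Z\<^esub> inv\<^bsub>PSL2Z\<^esub> a \<otimes>\<^bsub>PSL2Z\<^esub> inv\<^bsub>PSL2Z\<^esub> b}) \<subseteq> carrier PSL2Z"
    using Gamma2bar_lcs_subset Gamma2bar_subset by blast
  ultimately show ?thesis
    by (simp add: comm_subgroup_def PSL.generate_is_subgroup)
qed

section \<open>Generation of SL_2(Z) by elementary matrices\<close>

definition E12 :: "int \<Rightarrow> mat2" where
  "E12 m = mk2 1 m 0 1"

definition E21 :: "int \<Rightarrow> mat2" where
  "E21 m = mk2 1 0 m 1"

lemma E12_SL2Z [simp]: "E12 m \<in> SL2Z" and E21_SL2Z [simp]: "E21 m \<in> SL2Z"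
  by (simp_all add: E12_def E21_def)

lemma E12_add: "E12 m ** E12 n = E12 (m + n)" and E21_add: "E21 m ** E21 n = E21 (m + n)"
  by (simp_all add: E12_def E21_def)

lemma E12_0: "E12 0 = mat 1" and E21_0: "E21 0 = mat 1"
  by (simp_all add: E12_def E21_def mat1_eq_mk2)

lemma E12_mult_E12: "X ** E12 m ** E12 n = X ** E12 (m + n)"
  and E21_mult_E21: "X ** E21 m ** E21 n = X ** E21 (m + n)"
  by (simp_all flip: matrix_mul_assoc add: E12_add E21_add)

lemma right_mult_closed_one_parameter:
  fixes f :: "int \<Rightarrow> mat2"
  assumes f_add: "\<And>m n. f (m + n) = f m ** f n" and f_0: "f 0 = mat 1"
    and closed: "\<And>X. P X \<Longrightarrow> P (X ** f 1)" "\<And>X. P X \<Longrightarrow> P (X ** f (-1))"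
    and "P X"
  shows "P (X ** f m)"
proof (induction m rule: int_induct[where k = 0])
  case base
  show ?case using \<open>P X\<close> f_0 by simp
next
  case (step1 i)
  show ?case
    using closed(1)[OF step1(2)] f_add[of i 1] by (simp add: matrix_mul_assoc)
next
  case (step2 i)
  show ?case
    using closed(2)[OF step2(2)] f_add[of i "-1"] by (simp add: matrix_mul_assoc)
qed

text \<open>Replace d by some d' \<equiv> d (mod c) with 0 < d' \<le> |c| (so d' \<noteq> 0 even when c divides d),
  then c by c mod d'.\<close>
lemma lower_left_reduce:
  fixes X :: mat2
  assumes "X $ 2 $ 1 \<noteq> 0"
  obtains m m' where "\<bar>(X ** E12 m ** E21 m') $ 2 $ 1\<bar> < \<bar>X $ 2 $ 1\<bar>"
proof -
  obtain a b c d where X: "X = mk2 a b c d" by (rule mat2_cases)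
  with assms have "c \<noteq> 0"
    by simp
  define d' where "d' = (d - 1) mod \<bar>c\<bar> + 1"
  define c' where "c' = c mod d'"
  have "0 \<le> (d - 1) mod \<bar>c\<bar>" "(d - 1) mod \<bar>c\<bar> < \<bar>c\<bar>"
    using \<open>c \<noteq> 0\<close> by simp_all
  then have d'_bounds: "0 < d'" "d' \<le> \<bar>c\<bar>"
    unfolding d'_def by linarith+
  have c'_bounds: "0 \<le> c'" "c' < d'"
    using d'_bounds by (simp_all add: c'_def)
  have "(d' - 1) mod \<bar>c\<bar> = (d - 1) mod \<bar>c\<bar>"
    by (simp add: d'_def)
  then have "c dvd d' - d"
    by (simp add: mod_eq_dvd_iff)
  then obtain m where m: "d' = d + c * m"
    by (metis add_diff_cancel_left' add_diff_eq dvdE)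
  have "d' dvd c' - c"
    unfolding c'_def mod_eq_dvd_iff[symmetric] by simp
  then obtain m' where m': "c' = c + d' * m'"
    by (metis add_diff_cancel_left' add_diff_eq dvdE)
  have "(X ** E12 m ** E21 m') $ 2 $ 1 = c'"
    using X m m' by (simp add: E12_def E21_def algebra_simps)
  then show ?thesis
    using that[of m m'] X c'_bounds d'_bounds by simp
qed

text \<open>The second case is - E12 b, as (E12 (-1) E21 1 E12 (-1))^2 = - 1.\<close>
lemma SL2Z_upper_triangularE:
  assumes "X \<in> SL2Z" "X $ 2 $ 1 = 0"
  obtains b where "X = mat 1 ** E12 b"
    | b where "X = mat 1 ** E12 (-1) ** E21 1 ** E12 (-1) ** E12 (-1) ** E21 1 ** E12 (-1) ** E12 b"
proof -
  obtain a b c d where X: "X = mk2 a b c d" by (rule mat2_cases)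
  with assms have "c = 0" "a * d = 1"
    by simp_all
  then consider "a = 1" "d = 1" | "a = -1" "d = -1"
    by (auto simp: zmult_eq_1_iff)
  then show ?thesis
  proof cases
    case 1
    then show ?thesis
      using that(1)[of b] X \<open>c = 0\<close> by (simp add: E12_def mat1_eq_mk2)
  next
    case 2
    then show ?thesis
      using that(2)[of "- b"] X \<open>c = 0\<close> by (simp add: E12_def E21_def mat1_eq_mk2)
  qed
qed

lemma SL2Z_induct [consumes 1, case_names one E12 E12_inv E21 E21_inv]:
  assumes "M \<in> SL2Z" and "P (mat 1)"
    and "\<And>X. P X \<Longrightarrow> P (X ** E12 1)" "\<And>X. P X \<Longrightarrow> P (X ** E12 (-1))"
    and "\<And>X. P X \<Longrightarrow> P (X ** E21 1)" "\<And>X. P X \<Longrightarrow> P (X ** E21 (-1))"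
  shows "P M"
proof -
  have E12_closed: "P (X ** E12 m)" if "P X" for X m
    using right_mult_closed_one_parameter[of E12 P] that assms(3,4) E12_add E12_0 by metis
  have E21_closed: "P (X ** E21 m)" if "P X" for X m
    using right_mult_closed_one_parameter[of E21 P] that assms(5,6) E21_add E21_0 by metis
  have "P X" if "X \<in> SL2Z" "nat \<bar>X $ 2 $ 1\<bar> = n" for X n
    using that
  proof (induction n arbitrary: X rule: less_induct)
    case (less n)
    show "P X"
    proof (cases "X $ 2 $ 1 = 0")
      case True
      with less.prems(1) show ?thesis
        by (rule SL2Z_upper_triangularE) (use E12_closed E21_closed assms(2) in metis)+
    next
      case False
      then obtain m m' where "\<bar>(X ** E12 m ** E21 m') $ 2 $ 1\<bar> < \<bar>X $ 2 $ 1\<bar>"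
        by (rule lower_left_reduce)
      then have "P (X ** E12 m ** E21 m')"
        using less.IH[of "nat \<bar>(X ** E12 m ** E21 m') $ 2 $ 1\<bar>" "X ** E12 m ** E21 m'"] less.prems
        by (simp add: SL2Z_mult)
      moreover have "X = X ** E12 m ** E21 m' ** E21 (- m') ** E12 (- m)"
        by (simp add: E12_mult_E12 E21_mult_E21 E12_0 E21_0)
      ultimately show ?thesis
        using E12_closed E21_closed by metis
    qed
  qed
  then show ?thesis
    using assms(1) by blast
qed


section \<open>Reduction modulo N\<close>

lemma coprime_if_no_common_prime:
  fixes a b :: int
  assumes "a \<noteq> 0" "\<And>p. prime p \<Longrightarrow> p dvd a \<Longrightarrow> \<not> p dvd b"
  shows "coprime a b"
proof (rule coprimeI)
  fix u assume u: "u dvd a" "u dvd b"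
  show "is_unit u"
  proof (rule ccontr)
    assume "\<not> is_unit u"
    moreover have "u \<noteq> 0"
      using u(1) assms(1) by auto
    ultimately obtain p where "p dvd u" "prime p"
      using prime_divisor_exists by blast
    then show False
      using assms(2) u by (meson dvd_trans)
  qed
qed

lemma exists_coprime_shift:
  fixes c d N :: int
  assumes "c \<noteq> 0" and "coprime (gcd c d) N"
  obtains t where "coprime c (d + t * N)"
proof
  define Q where "Q = {p. prime p \<and> p dvd c \<and> \<not> p dvd d}"
  define t where "t = \<Prod>Q"
  have "finite Q"
    using finite_divisors_int[OF assms(1)] by (rule finite_subset[rotated]) (auto simp: Q_def)
  show "coprime c (d + t * N)"
  proof (rule coprime_if_no_common_prime[OF assms(1)], rule notI)
    fix p assume p: "prime p" "p dvd c" "p dvd d + t * N"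
    show False
    proof (cases "p dvd d")
      case True
      then have "p dvd t * N"
        using p(3) by (simp add: dvd_add_right_iff)
      moreover have "\<not> p dvd N"
      proof
        assume "p dvd N"
        moreover have "p dvd gcd c d"
          using True p(2) by simp
        ultimately have "is_unit p"
          using assms(2) coprime_common_divisor by blast
        then show False
          using \<open>prime p\<close> not_prime_unit by blast
      qed
      moreover have "\<not> p dvd t"
      proof
        assume "p dvd t"
        then obtain q where "q \<in> Q" "p dvd q"
          using prime_dvd_prod_iff[OF \<open>finite Q\<close> \<open>prime p\<close>, of id] by (auto simp: t_def)
        then have "p = q"
          using \<open>prime p\<close> by (simp add: Q_def primes_dvd_imp_eq)
        then show False
          using True \<open>q \<in> Q\<close> by (simp add: Q_def)
      qed
      ultimately show False
        using \<open>prime p\<close> by (simp add: prime_dvd_mult_iff)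
    next
      case False
      then have "p dvd t"
        using p(1,2) \<open>finite Q\<close> by (auto simp: t_def Q_def intro: dvd_prodI)
      then show False
        using p(3) False by (simp add: dvd_add_left_iff)
    qed
  qed
qed

lemma coprime_gcd_row:
  assumes "(a*d - b*c) mod int N = 1 mod int N"
  shows "coprime (gcd c d) (int N)"
proof (rule coprimeI)
  fix u assume u: "u dvd gcd c d" "u dvd int N"
  have "int N dvd (a*d - b*c) - 1"
    using assms by (simp add: mod_eq_dvd_iff)
  then have "u dvd (a*d - b*c) - 1"
    using u(2) by (rule dvd_trans[rotated])
  moreover have "u dvd a*d - b*c"
    using u(1) by simp
  ultimately have "u dvd (a*d - b*c) - ((a*d - b*c) - 1)"
    using dvd_diff by blast
  then show "is_unit u"
    by simp
qed

lemma SL2Z_lift_top_row: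
  assumes "coprime c d" "(a*d - b*c) mod int N = 1 mod int N"
  obtains a' b' where "mk2 a' b' c d \<in> SL2Z" "a' mod int N = a mod int N" "b' mod int N = b mod int N"
proof -
  obtain x y where "x * c + y * d = gcd c d"
    using bezout_int by blast
  with assms(1) have xy: "x * c + y * d = 1"
    by simp
  define \<alpha> where "\<alpha> = a*d - b*c - 1"
  have "int N dvd \<alpha>"
    using assms(2) by (simp add: \<alpha>_def mod_eq_dvd_iff)
  have "(a - \<alpha> * y) * d - (b + \<alpha> * x) * c = a*d - b*c - \<alpha> * (x * c + y * d)"
    by (simp add: algebra_simps)
  then have "(a - \<alpha> * y) * d - (b + \<alpha> * x) * c = 1"
    by (simp add: xy \<alpha>_def)
  then show ?thesis
    using that[of "a - \<alpha> * y" "b + \<alpha> * x"] \<open>int N dvd \<alpha>\<close> by (simp add: mod_eq_dvd_iff)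
qed

text \<open>Make the bottom row coprime without changing it mod N, then correct the top row.\<close>
lemma SL2Z_lift:
  assumes "det A mod int N = 1 mod int N"
  obtains M where "M \<in> SL2Z" "mat_cong N M A"
proof (cases "N = 0")
  case True
  then show ?thesis
    using assms that[of A] by (simp add: SL2Z_def)
next
  case False
  obtain a b c d where A: "A = mk2 a b c d" by (rule mat2_cases)
  define c1 where "c1 = (if c = 0 then int N else c)"
  have "c1 \<noteq> 0" "c1 mod int N = c mod int N"
    using False by (simp_all add: c1_def)
  have "(a*d - b*c1) mod int N = (a*d - b*c) mod int N"
    using \<open>c1 mod int N = c mod int N\<close> by (intro mod_diff_cong mod_mult_cong) simp_all
  then have det1: "(a*d - b*c1) mod int N = 1 mod int N"
    using assms A by simp
  then have "coprime (gcd c1 d) (int N)"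
    by (rule coprime_gcd_row)
  then obtain t where "coprime c1 (d + t * int N)"
    using exists_coprime_shift[OF \<open>c1 \<noteq> 0\<close>] by blast
  moreover have "(a * (d + t * int N) - b * c1) mod int N = 1 mod int N"
  proof -
    have "a * (d + t * int N) - b * c1 = (a*d - b*c1) + (a * t) * int N"
      by (simp add: algebra_simps)
    then show ?thesis
      using det1 by (simp only: mod_mult_self1)
  qed
  ultimately obtain a' b' where "mk2 a' b' c1 (d + t * int N) \<in> SL2Z"
    "a' mod int N = a mod int N" "b' mod int N = b mod int N"
    by (rule SL2Z_lift_top_row)
  with \<open>c1 mod int N = c mod int N\<close> show ?thesis
    using that[of "mk2 a' b' c1 (d + t * int N)"] by (simp add: A)
qed

text \<open>As N + 1 is even, E12 (e (N + 1)) \<in> Gamma(2) reduces to E12 e mod N, and similarly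
  for E21.\<close>
lemma Gamma2_reduction_surj:
  assumes "odd N" "M \<in> SL2Z"
  obtains B where "B \<in> Gamma2" "mat_cong N B M"
proof -
  have E_even: "mat_cong 2 (E12 (e * (int N + 1))) (mat 1)" "mat_cong 2 (E21 (e * (int N + 1))) (mat 1)"
    for e
    using assms(1) by (simp_all add: E12_def E21_def mat1_eq_mk2)
  have E_modN: "mat_cong N (E12 (e * (int N + 1))) (E12 e)" "mat_cong N (E21 (e * (int N + 1))) (E21 e)"
    for e
    by (simp_all add: E12_def E21_def algebra_simps)
  have Gamma2_mult: "B ** X \<in> Gamma2" if "B \<in> Gamma2" "X \<in> SL2Z" "mat_cong 2 X (mat 1)" for B X
    using that mat_cong_mult[of 2 B "mat 1" X "mat 1"] by (auto simp: Gamma2_def SL2Z_mult)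
  have "\<exists>B\<in>Gamma2. mat_cong N B M"
    using assms(2)
  proof (induction rule: SL2Z_induct)
    case one
    show ?case
      by (intro bexI[of _ "mat 1"]) (simp_all add: Gamma2_def)
  qed (use Gamma2_mult E_even E_modN mat_cong_mult E12_SL2Z E21_SL2Z in blast)+
  then show ?thesis
    using that by blast
qed


section \<open>A character of SL_2(Z) of order 3\<close>

text \<open>PSL_2(F_3) \<cong> A_4 has abelianisation Z/3Z, with kernel the Klein four-group D_3.
  chi is a polynomial formula for the resulting character of SL_2(Z); its
  multiplicativity is checked on all 24 elements of SL_2(F_3).\<close>
definition chi4 :: "int \<Rightarrow> int \<Rightarrow> int \<Rightarrow> int \<Rightarrow> int" where
  "chi4 a b c d = (a*b*(1 - c^2) + c*(a + d)) mod 3"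

definition chi :: "mat2 \<Rightarrow> int" where
  "chi A = chi4 (A$1$1) (A$1$2) (A$2$1) (A$2$2)"

definition SL2_F3 :: "(int \<times> int \<times> int \<times> int) list" where
  "SL2_F3 = [(0,1,2,0), (0,1,2,1), (0,1,2,2), (0,2,1,0), (0,2,1,1), (0,2,1,2), (1,0,0,1),
    (1,0,1,1), (1,0,2,1), (1,1,0,1), (1,1,1,2), (1,1,2,0), (1,2,0,1), (1,2,1,0), (1,2,2,2),
    (2,0,0,2), (2,0,1,2), (2,0,2,2), (2,1,0,2), (2,1,1,1), (2,1,2,0), (2,2,0,2), (2,2,1,0),
    (2,2,2,1)]"

lemma chi_mk2 [simp]: "chi (mk2 a b c d) = chi4 a b c d"
  by (simp add: chi_def)

lemma chi4_mod3: "chi4 a b c d = chi4 (a mod 3) (b mod 3) (c mod 3) (d mod 3)"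
  unfolding chi4_def by (intro mod_add_cong mod_mult_cong mod_diff_cong) (simp_all add: power_mod)

lemma chi4_cong:
  "a mod 3 = a' mod 3 \<Longrightarrow> b mod 3 = b' mod 3 \<Longrightarrow> c mod 3 = c' mod 3 \<Longrightarrow> d mod 3 = d' mod 3
   \<Longrightarrow> chi4 a b c d = chi4 a' b' c' d'"
  by (metis chi4_mod3)

lemma SL2_F3_complete:
  assumes "(a*d - b*c) mod 3 = 1"
  shows "(a mod 3, b mod 3, c mod 3, d mod 3) \<in> set SL2_F3"
proof -
  have det: "((a mod 3)*(d mod 3) - (b mod 3)*(c mod 3)) mod 3 = 1"
    using assms by (metis mod_diff_eq mod_mult_eq)
  have residue: "x mod 3 = 0 \<or> x mod 3 = 1 \<or> x mod 3 = 2" for x :: int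
    by arith
  show ?thesis
    using residue[of a] residue[of b] residue[of c] residue[of d] det
    by (elim disjE) (simp_all add: SL2_F3_def)
qed

lemma chi4_mult_SL2_F3:
  assumes "(a, b, c, d) \<in> set SL2_F3" "(e, f, g, h) \<in> set SL2_F3"
  shows "chi4 (a*e + b*g) (a*f + b*h) (c*e + d*g) (c*f + d*h) = (chi4 a b c d + chi4 e f g h) mod 3"
proof -
  have "\<forall>(a, b, c, d)\<in>set SL2_F3. \<forall>(e, f, g, h)\<in>set SL2_F3.
     chi4 (a*e + b*g) (a*f + b*h) (c*e + d*g) (c*f + d*h) = (chi4 a b c d + chi4 e f g h) mod 3"
    by code_simp
  from bspec[OF this assms(1)]
  have "\<forall>(e, f, g, h)\<in>set SL2_F3.
     chi4 (a*e + b*g) (a*f + b*h) (c*e + d*g) (c*f + d*h) = (chi4 a b c d + chi4 e f g h) mod 3"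
    by (simp only: prod.case)
  from bspec[OF this assms(2)] show ?thesis
    by (simp only: prod.case)
qed

lemma chi_mult:
  assumes "det A mod 3 = 1" "det B mod 3 = 1"
  shows "chi (A ** B) = (chi A + chi B) mod 3"
proof -
  obtain a b c d where A: "A = mk2 a b c d" by (rule mat2_cases)
  obtain e f g h where B: "B = mk2 e f g h" by (rule mat2_cases)
  let ?r = "\<lambda>x :: int. x mod 3"
  have "chi (A ** B) = chi4 (?r a * ?r e + ?r b * ?r g) (?r a * ?r f + ?r b * ?r h)
      (?r c * ?r e + ?r d * ?r g) (?r c * ?r f + ?r d * ?r h)"
    unfolding A B by simp (intro chi4_cong mod_add_cong mod_mult_cong; simp)
  also have "\<dots> = (chi4 (?r a) (?r b) (?r c) (?r d) + chi4 (?r e) (?r f) (?r g) (?r h)) mod 3"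
  proof -
    have "(?r a, ?r b, ?r c, ?r d) \<in> set SL2_F3" and "(?r e, ?r f, ?r g, ?r h) \<in> set SL2_F3"
      using assms unfolding A B by (simp_all add: SL2_F3_complete)
    then show ?thesis
      by (rule chi4_mult_SL2_F3)
  qed
  also have "\<dots> = (chi A + chi B) mod 3"
    unfolding A B by (simp flip: chi4_mod3)
  finally show ?thesis .
qed

lemma chi_SL2Z_mult: "A \<in> SL2Z \<Longrightarrow> B \<in> SL2Z \<Longrightarrow> chi (A ** B) = (chi A + chi B) mod 3"
  by (simp add: SL2Z_def chi_mult)

lemma chi_bounds: "0 \<le> chi A" "chi A < 3"
  by (simp_all add: chi_def chi4_def)

lemma chi_one [simp]: "chi (mat 1) = 0"
  by (simp add: mat1_eq_mk2 chi4_def)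

lemma chi_uminus [simp]: "chi (- A) = chi A"
  by (cases A rule: mat2_cases) (simp add: chi4_def algebra_simps power2_eq_square)

lemma chi_E12: "chi (E12 m) = m mod 3" and chi_E21: "chi (E21 m) = (- m) mod 3"
  by (simp_all add: E12_def E21_def chi4_def) presburger

lemma chi_adj2: "A \<in> SL2Z \<Longrightarrow> chi (adj2 A) = (- chi A) mod 3"
  using chi_SL2Z_mult[of "adj2 A" A] chi_bounds[of A] chi_bounds[of "adj2 A"]
  by (simp add: SL2Z_adj2 SL2Z_adj2_left) presburger

lemma chi_commutator: "A \<in> SL2Z \<Longrightarrow> B \<in> SL2Z \<Longrightarrow> chi (A ** B ** adj2 A ** adj2 B) = 0"
  by (simp add: chi_SL2Z_mult chi_adj2 SL2Z_mult SL2Z_adj2) presburger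

lemma mat_cong_chi: "mat_cong 3 A B \<Longrightarrow> chi A = chi B"
  by (cases A rule: mat2_cases; cases B rule: mat2_cases) (auto intro!: chi4_cong)

lemma chi_eq_0_iff_D3:
  assumes "det A mod 3 = 1"
  shows "chi A = 0 \<longleftrightarrow> (\<exists>D\<in>D3_reps. mat_cong 3 A D \<or> mat_cong 3 A (- D))"
proof -
  obtain a b c d where A: "A = mk2 a b c d" by (rule mat2_cases)
  have "(a mod 3, b mod 3, c mod 3, d mod 3) \<in> set SL2_F3"
    using assms A by (simp add: SL2_F3_complete)
  then show ?thesis
    unfolding A chi_mk2 chi4_mod3[of a] D3_reps_def
    by (simp add: SL2_F3_def) (elim disjE; simp add: chi4_def)
qed

section \<open>The lower central series modulo N\<close>

text \<open>The preimage in SL_2(Z) of the image of H \<subseteq> PSL_2(Z) in PSL_2(Z/NZ).\<close>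
definition mod_hull :: "mat2 set set \<Rightarrow> nat \<Rightarrow> mat2 set" where
  "mod_hull H N = {M \<in> SL2Z. \<exists>C\<in>H. \<exists>A\<in>C. mat_cong N A M}"

lemma mod_hullI: "A \<in> SL2Z \<Longrightarrow> psl_class A \<in> H \<Longrightarrow> M \<in> SL2Z \<Longrightarrow> mat_cong N A M \<Longrightarrow> M \<in> mod_hull H N"
  unfolding mod_hull_def using psl_class_self by blast

lemma mod_hullE:
  assumes "M \<in> mod_hull H N" "H \<subseteq> carrier PSL2Z"
  obtains A where "A \<in> SL2Z" "psl_class A \<in> H" "mat_cong N A M" "M \<in> SL2Z"
proof -
  obtain C A where "C \<in> H" "A \<in> C" "mat_cong N A M" "M \<in> SL2Z"
    using assms(1) by (auto simp: mod_hull_def)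
  moreover have "C = psl_class A" "A \<in> SL2Z"
    using PSL2Z_memberE assms(2) \<open>C \<in> H\<close> \<open>A \<in> C\<close> by blast+
  ultimately show ?thesis
    using that by simp
qed

lemma mod_hull_cong: "M \<in> mod_hull H N \<Longrightarrow> M' \<in> SL2Z \<Longrightarrow> mat_cong N M M' \<Longrightarrow> M' \<in> mod_hull H N"
  unfolding mod_hull_def using mat_cong_trans by blast

lemma subgroup_mod_hull:
  assumes "subgroup H PSL2Z"
  shows "subgroup (mod_hull H N) SL2Z_grp"
proof (rule SL.subgroupI)
  show "mod_hull H N \<subseteq> carrier SL2Z_grp"
    by (auto simp: mod_hull_def)
  have "psl_class (mat 1) \<in> H"
    using psl.hom_one subgroup.one_closed[OF assms] by simp
  then have "mat 1 \<in> mod_hull H N"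
    by (simp add: mod_hullI[of "mat 1"])
  then show "mod_hull H N \<noteq> {}"
    by blast
next
  fix M assume "M \<in> mod_hull H N"
  then obtain A where A: "A \<in> SL2Z" "psl_class A \<in> H" "mat_cong N A M" "M \<in> SL2Z"
    using mod_hullE subgroup.subset[OF assms] by blast
  then have "psl_class (adj2 A) \<in> H"
    using psl.hom_inv[of A] subgroup.m_inv_closed[OF assms] by simp
  then show "inv\<^bsub>SL2Z_grp\<^esub> M \<in> mod_hull H N"
    using A by (simp add: mod_hullI[of "adj2 A"] SL2Z_adj2 mat_cong_adj2)
next
  fix M M' assume "M \<in> mod_hull H N" "M' \<in> mod_hull H N"
  then obtain A A' where A: "A \<in> SL2Z" "psl_class A \<in> H" "mat_cong N A M" "M \<in> SL2Z"
    and A': "A' \<in> SL2Z" "psl_class A' \<in> H" "mat_cong N A' M'" "M' \<in> SL2Z"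
    using mod_hullE subgroup.subset[OF assms] by metis
  then have "psl_class (A ** A') \<in> H"
    using psl.hom_mult[of A A'] subgroup.m_closed[OF assms] by simp
  then show "M \<otimes>\<^bsub>SL2Z_grp\<^esub> M' \<in> mod_hull H N"
    using A A' by (simp add: mod_hullI[of "A ** A'"] SL2Z_mult mat_cong_mult)
qed

lemma mod_hull_Gamma2bar: "odd N \<Longrightarrow> M \<in> SL2Z \<Longrightarrow> M \<in> mod_hull Gamma2bar N"
  by (rule Gamma2_reduction_surj) (auto simp: Gamma2bar_eq Gamma2_def intro: mod_hullI)

lemma commutator_in_mod_hull_lcs:
  assumes "1 \<le> k" "odd N" "M \<in> mod_hull (Gamma2bar_lcs k) N" "X \<in> SL2Z"
  shows "M ** X ** adj2 M ** adj2 X \<in> mod_hull (Gamma2bar_lcs (Suc k)) N"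
proof -
  obtain A where A: "A \<in> SL2Z" "psl_class A \<in> Gamma2bar_lcs k" "mat_cong N A M" "M \<in> SL2Z"
    using mod_hullE assms(3) Gamma2bar_lcs_subset by blast
  obtain B where B: "B \<in> Gamma2" "mat_cong N B X"
    using Gamma2_reduction_surj assms(2,4) by blast
  have "B \<in> SL2Z" "psl_class B \<in> Gamma2bar"
    using B(1) by (simp_all add: Gamma2_def Gamma2bar_eq)
  then have "psl_class (A ** B ** adj2 A ** adj2 B) \<in> Gamma2bar_lcs (Suc k)"
    using A PSL2Z_commutator[of A B] Gamma2bar_lcs_Suc[OF assms(1)]
    unfolding comm_subgroup_def by (auto intro: generate.incl)
  moreover have "mat_cong N (A ** B ** adj2 A ** adj2 B) (M ** X ** adj2 M ** adj2 X)"
    by (intro mat_cong_mult mat_cong_adj2 A(3) B(2))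
  ultimately show ?thesis
    using A \<open>B \<in> SL2Z\<close> assms(4) by (intro mod_hullI) (simp_all add: SL2Z_mult SL2Z_adj2)
qed

lemma subgroup_SL2Z_closed:
  assumes "subgroup H SL2Z_grp"
  shows "mat 1 \<in> H" and "A \<in> H \<Longrightarrow> B \<in> H \<Longrightarrow> A ** B \<in> H" and "A \<in> H \<Longrightarrow> adj2 A \<in> H"
  using subgroup.one_closed[OF assms] subgroup.m_closed[OF assms, of A B]
    subgroup.m_inv_closed[OF assms, of A] subgroup.subset[OF assms]
  by auto

lemma E12_coset_step:
  assumes H: "subgroup H SL2Z_grp" and "X \<in> SL2Z" "Y \<in> SL2Z"
    and "X ** E12 (- j) \<in> H" "(chi X - j) mod 3 = 0"
    and "E12 j ** Y ** E12 (- (j + c)) \<in> H" "(chi Y - c) mod 3 = 0"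
  shows "X ** Y ** E12 (- (j + c)) \<in> H" "(chi (X ** Y) - (j + c)) mod 3 = 0"
proof -
  have "X ** Y ** E12 (- (j + c)) = X ** E12 (- j) ** (E12 j ** Y ** E12 (- (j + c)))"
    by (simp add: matrix_mul_assoc E12_mult_E12 E12_0)
  then show "X ** Y ** E12 (- (j + c)) \<in> H"
    using subgroup_SL2Z_closed(2)[OF H assms(4,6)] by simp
  show "(chi (X ** Y) - (j + c)) mod 3 = 0"
    using assms(5,7) chi_SL2Z_mult[OF assms(2,3)] by presburger
qed

lemma E12_coset_representative:
  assumes H: "subgroup H SL2Z_grp"
    and E21_conj: "\<And>j. E12 j ** E21 1 ** E12 (1 - j) \<in> H"
    and "M \<in> SL2Z"
  obtains j where "M ** E12 (- j) \<in> H" "(chi M - j) mod 3 = 0"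
proof -
  define P where "P X \<longleftrightarrow> X \<in> SL2Z \<and> (\<exists>j. X ** E12 (- j) \<in> H \<and> (chi X - j) mod 3 = 0)" for X
  have step: "P (X ** Y)"
    if "P X" "Y \<in> SL2Z" "(chi Y - c) mod 3 = 0" "\<And>j. E12 j ** Y ** E12 (- (j + c)) \<in> H" for X Y c
  proof -
    obtain j where j: "X \<in> SL2Z" "X ** E12 (- j) \<in> H" "(chi X - j) mod 3 = 0"
      using \<open>P X\<close> by (auto simp: P_def)
    show ?thesis
      unfolding P_def using E12_coset_step[OF H j(1) that(2) j(2,3) that(4,3)] SL2Z_mult[OF j(1) that(2)]
      by (intro conjI exI[of _ "j + c"])
  qed
  have "P M"
    using \<open>M \<in> SL2Z\<close>
  proof (induction rule: SL2Z_induct)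
    case one
    have "mat 1 ** E12 (- 0) \<in> H"
      using subgroup_SL2Z_closed(1)[OF H] by (simp add: E12_0)
    then show ?case
      unfolding P_def by (metis SL2Z_one chi_one diff_zero mod_0)
  next
    case (E12 X)
    then show ?case
      by (rule step[where c = 1]) (simp_all add: chi_E12 E12_add E12_0 subgroup_SL2Z_closed(1)[OF H])
  next
    case (E12_inv X)
    then show ?case
      by (rule step[where c = "-1"]) (simp_all add: chi_E12 E12_add E12_0 subgroup_SL2Z_closed(1)[OF H])
  next
    case (E21 X)
    then show ?case
      by (rule step[where c = "-1"]) (simp_all add: chi_E21 E21_conj[simplified])
  next
    case (E21_inv X)
    have "E12 j ** E21 (-1) ** E12 (- j - 1) = adj2 (E12 (j + 1) ** E21 1 ** E12 (1 - (j + 1)))" for j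
      by (simp add: E12_def E21_def algebra_simps)
    then have conj_inv: "E12 j ** E21 (-1) ** E12 (- j - 1) \<in> H" for j
      using subgroup_SL2Z_closed(3)[OF H E21_conj[of "j + 1"]] by simp
    from E21_inv show ?case
      by (rule step[where c = 1]) (simp_all add: chi_E21 conj_inv)
  qed
  then show ?thesis
    using that by (auto simp: P_def)
qed

lemma chi_kernel_subset:
  assumes H: "subgroup H SL2Z_grp"
    and E12_mult3: "\<And>t. E12 (3 * t) \<in> H"
    and E21_conj: "\<And>j. E12 j ** E21 1 ** E12 (1 - j) \<in> H"
    and "M \<in> SL2Z" "chi M = 0"
  shows "M \<in> H"
proof -
  obtain j where j: "M ** E12 (- j) \<in> H" "(chi M - j) mod 3 = 0"
    using E12_coset_representative[OF H E21_conj \<open>M \<in> SL2Z\<close>] by blast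
  then obtain t where "j = 3 * t"
    using \<open>chi M = 0\<close> by (metis diff_0 dvd_def mod_0_imp_dvd dvd_minus_iff)
  then have "M ** E12 (- j) ** E12 j \<in> H"
    using subgroup_SL2Z_closed(2)[OF H j(1) E12_mult3[of t]] by simp
  then show ?thesis
    by (simp add: E12_mult_E12 E12_0)
qed

text \<open>S = mk2 0 (-1) 1 0 conjugates E12 (-1) to E21 1, so the commutator of
  E12 j S E12 (- j) with E12 (-1) is E12 j E21 1 E12 (1 - j).\<close>
lemma E12_conj_E21_in_mod_hull_lcs:
  assumes "1 \<le> k" "odd N"
    and kernel: "\<And>M. M \<in> SL2Z \<Longrightarrow> chi M = 0 \<Longrightarrow> M \<in> mod_hull (Gamma2bar_lcs k) N"
  shows "E12 j ** E21 1 ** E12 (1 - j) \<in> mod_hull (Gamma2bar_lcs (Suc k)) N"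
proof -
  define X where "X = E12 j ** mk2 0 (-1) 1 0 ** E12 (- j)"
  have "X \<in> SL2Z" "chi X = 0"
    by (simp_all add: X_def SL2Z_mult E12_def chi4_def)
  then have "X ** E12 (-1) ** adj2 X ** adj2 (E12 (-1)) \<in> mod_hull (Gamma2bar_lcs (Suc k)) N"
    using commutator_in_mod_hull_lcs assms(1,2) kernel by simp
  moreover have "X ** E12 (-1) ** adj2 X ** adj2 (E12 (-1)) = E12 j ** E21 1 ** E12 (1 - j)"
    by (simp add: X_def E12_def E21_def algebra_simps)
  ultimately show ?thesis
    by simp
qed

text \<open>With N = 2 m + 1, the matrix M0 below reduces mod N to diag(2, 1/2), which conjugates
  E12 t to E12 (4 t); and chi M0 = 0.\<close>
lemma E12_mult3_in_mod_hull_lcs: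
  assumes "1 \<le> k" "odd N"
    and kernel: "\<And>M. M \<in> SL2Z \<Longrightarrow> chi M = 0 \<Longrightarrow> M \<in> mod_hull (Gamma2bar_lcs k) N"
  shows "E12 (3 * t) \<in> mod_hull (Gamma2bar_lcs (Suc k)) N"
proof -
  obtain m0 where "N = 2 * m0 + 1"
    using assms(2) oddE by blast
  define m where "m = int m0"
  have m: "int N = 2 * m + 1"
    using \<open>N = 2 * m0 + 1\<close> by (simp add: m_def)
  define n where "n = int N"
  define M0 where "M0 = mk2 2 n n (2*m*m + 2*m + 1)"
  have "M0 \<in> SL2Z"
    by (simp add: M0_def n_def m algebra_simps)
  moreover have "chi M0 = 0"
  proof -
    have "2*n*(1 - n^2) + n*(2 + (2*m*m + 2*m + 1)) = 3 * (n * (1 - 2*m - 2*m*m))"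
      by (simp add: n_def m algebra_simps power2_eq_square)
    then show ?thesis
      by (simp add: M0_def chi4_def)
  qed
  ultimately have "M0 ** E12 t ** adj2 M0 ** adj2 (E12 t) \<in> mod_hull (Gamma2bar_lcs (Suc k)) N"
    using commutator_in_mod_hull_lcs assms(1,2) kernel by simp
  moreover have "M0 ** E12 t ** adj2 M0 ** adj2 (E12 t)
      = mk2 (1 - 2*n*t) (3*t + 2*n*t*t) (- n*n*t) (1 + 2*n*t + n*n*t*t)"
    by (simp add: M0_def E12_def n_def m algebra_simps power2_eq_square)
  moreover have "mat_cong N (mk2 (1 - 2*n*t) (3*t + 2*n*t*t) (- n*n*t) (1 + 2*n*t + n*n*t*t)) (E12 (3 * t))"
    by (simp add: E12_def n_def mod_eq_dvd_iff algebra_simps)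
  ultimately show ?thesis
    using mod_hull_cong E12_SL2Z by simp
qed

lemma mod_hull_Gamma2bar_lcs:
  assumes "1 \<le> k" "odd N" "M \<in> SL2Z" "chi M = 0"
  shows "M \<in> mod_hull (Gamma2bar_lcs k) N"
  using assms(1,3,4)
proof (induction k arbitrary: M rule: nat_induct_at_least)
  case base
  then show ?case
    using mod_hull_Gamma2bar assms(2) by simp
next
  case (Suc k)
  show ?case
  proof (rule chi_kernel_subset)
    show "subgroup (mod_hull (Gamma2bar_lcs (Suc k)) N) SL2Z_grp"
      using Suc.hyps by (simp add: subgroup_mod_hull subgroup_Gamma2bar_lcs)
    show "E12 (3 * t) \<in> mod_hull (Gamma2bar_lcs (Suc k)) N" for t
      using E12_mult3_in_mod_hull_lcs Suc.hyps assms(2) Suc.IH by blast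
    show "E12 j ** E21 1 ** E12 (1 - j) \<in> mod_hull (Gamma2bar_lcs (Suc k)) N" for j
      using E12_conj_E21_in_mod_hull_lcs Suc.hyps assms(2) Suc.IH by blast
  qed (use Suc.prems in simp_all)
qed

lemma chi_Gamma2bar_lcs:
  assumes "2 \<le> k" "C \<in> Gamma2bar_lcs k" "A \<in> C"
  shows "chi A = 0"
proof -
  define K where "K = {A \<in> SL2Z. chi A = 0}"
  have "mat 1 \<in> K"
    by (simp add: K_def)
  have "subgroup K SL2Z_grp"
  proof (rule SL.subgroupI)
    show "K \<noteq> {}"
      using \<open>mat 1 \<in> K\<close> by blast
  qed (auto simp: K_def SL2Z_mult SL2Z_adj2 chi_SL2Z_mult chi_adj2)
  then have K: "subgroup (psl_class ` K) PSL2Z"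
    by (rule psl.subgroup_img_is_subgroup)
  have "Gamma2bar_lcs k = comm_subgroup PSL2Z (Gamma2bar_lcs (k - 1)) Gamma2bar"
    using assms(1) Gamma2bar_lcs_Suc[of "k - 1"] by simp
  also have "\<dots> \<subseteq> psl_class ` K"
    unfolding comm_subgroup_def
  proof (rule PSL.generate_subgroup_incl[OF _ K], safe)
    fix a b assume "a \<in> Gamma2bar_lcs (k - 1)" "b \<in> Gamma2bar"
    then obtain A0 B0 where "A0 \<in> SL2Z" "a = psl_class A0" "B0 \<in> SL2Z" "b = psl_class B0"
      using Gamma2bar_lcs_subset Gamma2bar_subset by (force simp: carrier_PSL2Z)
    then show "a \<otimes>\<^bsub>PSL2Z\<^esub> b \<otimes>\<^bsub>PSL2Z\<^esub> inv\<^bsub>PSL2Z\<^esub> a \<otimes>\<^bsub>PSL2Z\<^esub> inv\<^bsub>PSL2Z\<^esub> b \<in> psl_class ` K"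
      by (simp add: PSL2Z_commutator K_def SL2Z_mult SL2Z_adj2 chi_commutator)
  qed
  finally obtain B where "B \<in> K" "C = psl_class B"
    using assms(2) by blast
  then show ?thesis
    using assms(3) by (auto simp: K_def psl_class_def)
qed

lemma in_Dhat_odd_iff_chi:
  assumes "g \<in> SL2_Zodd"
  shows "in_Dhat_odd g \<longleftrightarrow> chi (g 3) = 0"
proof -
  have "\<forall>n. odd n \<longrightarrow> det (g n) mod int n = 1 mod int n"
    using assms by (simp add: SL2_Zodd_def)
  then have "det (g 3) mod 3 = 1"
    by (drule_tac spec[of _ 3]) simp
  then show ?thesis
    unfolding in_Dhat_odd_def using chi_eq_0_iff_D3 by blast
qed

lemma SL2_Zodd_lift:
  assumes "g \<in> SL2_Zodd" "odd N"
  obtains M where "M \<in> SL2Z" "\<And>n. n dvd N \<Longrightarrow> mat_cong n M (g n)"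
proof -
  have "det (g N) mod int N = 1 mod int N"
    using assms by (simp add: SL2_Zodd_def)
  then obtain M where M: "M \<in> SL2Z" "mat_cong N M (g N)"
    by (rule SL2Z_lift)
  have "mat_cong n M (g n)" if "n dvd N" for n
  proof -
    have "odd n"
      using assms(2) that by (auto elim: dvd_trans[rotated])
    then have "mat_cong n (g N) (g n)"
      using assms that by (simp add: SL2_Zodd_def)
    then show ?thesis
      using mat_cong_dvd[OF that M(2)] mat_cong_trans by blast
  qed
  then show ?thesis
    using M(1) that by blast
qed

lemma in_Dhat_odd_if_in_closure_lcs:
  assumes "2 \<le> k" "g \<in> SL2_Zodd" "in_closure_PSL2_Zodd (Gamma2bar_lcs k) g"
  shows "in_Dhat_odd g"
proof -
  have "odd (3::nat)"
    by simp
  with assms(3) obtain C A where "C \<in> Gamma2bar_lcs k" "A \<in> C" "mat_cong 3 A (g 3)"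
    unfolding in_closure_PSL2_Zodd_def by blast
  then have "chi (g 3) = 0"
    using chi_Gamma2bar_lcs[OF assms(1)] mat_cong_chi by metis
  then show ?thesis
    using in_Dhat_odd_iff_chi assms(2) by blast
qed

lemma in_closure_lcs_if_in_Dhat_odd:
  assumes "1 \<le> k" "g \<in> SL2_Zodd" "in_Dhat_odd g"
  shows "in_closure_PSL2_Zodd (Gamma2bar_lcs k) g"
  unfolding in_closure_PSL2_Zodd_def
proof (intro allI impI)
  fix n :: nat assume "odd n"
  then have "odd (3 * n)"
    by simp
  then obtain M where M: "M \<in> SL2Z" "\<And>m. m dvd 3 * n \<Longrightarrow> mat_cong m M (g m)"
    using SL2_Zodd_lift assms(2) by blast
  have "chi M = 0"
    using M(2)[of 3] mat_cong_chi in_Dhat_odd_iff_chi assms(2,3) by simp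
  then have "M \<in> mod_hull (Gamma2bar_lcs k) (3 * n)"
    using mod_hull_Gamma2bar_lcs assms(1) \<open>odd (3 * n)\<close> M(1) by simp
  then obtain C A where "C \<in> Gamma2bar_lcs k" "A \<in> C" "mat_cong (3 * n) A M"
    by (auto simp: mod_hull_def)
  moreover have "mat_cong n A (g n)"
    using mat_cong_dvd[of n "3 * n"] calculation(3) M(2)[of n] mat_cong_trans by fastforce
  ultimately show "\<exists>C\<in>Gamma2bar_lcs k. \<exists>A\<in>C. mat_cong n A (g n)"
    by blast
qed

theorem proposition13:
  fixes k :: nat
  assumes "k \<ge> 2"
  shows "\<forall>g\<in>SL2_Zodd. in_closure_PSL2_Zodd (Gamma2bar_lcs k) g \<longleftrightarrow> in_Dhat_odd g"
proof (intro ballI iffI)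
  fix g
  assume "g \<in> SL2_Zodd" "in_closure_PSL2_Zodd (Gamma2bar_lcs k) g"
  then show "in_Dhat_odd g"
    by (rule in_Dhat_odd_if_in_closure_lcs[OF assms])
next
  fix g
  assume "g \<in> SL2_Zodd" "in_Dhat_odd g"
  moreover have "1 \<le> k"
    using assms by simp
  ultimately show "in_closure_PSL2_Zodd (Gamma2bar_lcs k) g"
    using in_closure_lcs_if_in_Dhat_odd by blast
qed

end
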